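(* Let $(B,\bot,\top,\wedge,\vee)$ be a representable quantum bounded distributive lattice, and let $\neg,\widetilde{\neg}:B\to B$ be two linear maps, each of which is a quantum negation for it. Then $\neg=\widetilde{\neg}$.
   Context: $\Bbbk$ is a field of characteristic zero; coalgebras are counital coassociative with Sweedler notation $\Delta(b)=b_{(1)}\otimes b_{(2)}$. A representable quantum bounded distributive lattice is a coalgebra $B$ with group-like elements $\bot,\top\in B$ ($\Delta(\top)=\top\otimes\top$, $\varepsilon(\top)=1$, same for $\bot$) and coalgebra maps $\wedge,\vee:B\otimes B\to B$ (for the tensor product coalgebra structure $\Delta(b\otimes b')=b_{(1)}\otimes b'_{(1)}\otimes b_{(2)}\otimes b'_{(2)}$), written $b\wedge b':=\wedge(b\otimes b')$, $b\vee b':=\vee(b\otimes b')$, such that for all $b,b',b''\in B$: (associativity) $(b\wedge b')\wedge b''=b\wedge(b'\wedge b'')$, $(b\vee b')\vee b''=b\vee(b'\vee b'')$; (identity) $b\wedge\top=b$, $b\vee\bot=b$; (commutativity) $b\wedge b'=b'\wedge b$, $b\vee b'=b'\vee b$; (absorption) $b_{(1)}\wedge(b_{(2)}\vee b')=\varepsilon(b')b$, $b_{(1)}\vee(b_{(2)}\wedge b')=\varepsilon(b')b$; (distributivity) $b\vee(b'\wedge b'')=(b_{(1)}\vee b')\wedge(b_{(2)}\vee b'')$, $b\wedge(b'\vee b'')=(b_{(1)}\wedge b')\vee(b_{(2)}\wedge b'')$. A quantum negation is a linear map $\neg:B\to B$ with $\neg\circ\neg=\mathrm{id}_B$ which is a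 coalgebra map $B\to B^{o}$ into the co-opposite coalgebra, i.e. $\Delta(\neg b)=\neg(b_{(2)})\otimes\neg(b_{(1)})$ and $\varepsilon(\neg b)=\varepsilon(b)$, and which satisfies the complement axioms $\neg(b_{(1)})\vee b_{(2)}=b_{(1)}\vee\neg(b_{(2)})=\varepsilon(b)\top$ and $\neg(b_{(1)})\wedge b_{(2)}=b_{(1)}\wedge\neg(b_{(2)})=\varepsilon(b)\bot$ for all $b\in B$. A representable quantum Boolean algebra is a representable quantum bounded distributive lattice admitting a quantum negation. *)

theory Defs
  imports Complex_Main
begin

text \<open>
  B is a type 'b with a vector space structure over a field 'k of
  characteristic zero, given by the scalar multiplication scale.
  Elements of B (x) B are represented by finite lists of pairs (formal sums of
  pure tensors); B (x) B (x) B by lists of triples.  Over a field, two such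
  formal sums are equal in the algebraic tensor product iff every
  (multi)linear scalar form takes the same value on them.  Linear maps out of
  B (x) B are represented by bilinear maps B x B -> B (universal property).
  The comultiplication is a function comul :: 'b => ('b * 'b) list
  (a chosen representative of Delta b, Sweedler form).
\<close>

definition lin :: "('k::field \<Rightarrow> 'b::ab_group_add \<Rightarrow> 'b) \<Rightarrow> ('b \<Rightarrow> 'k) \<Rightarrow> bool" where
  "lin scale f \<longleftrightarrow> Vector_Spaces.linear scale (*) f"

definition bilin_form :: "('k::field \<Rightarrow> 'b::ab_group_add \<Rightarrow> 'b) \<Rightarrow> ('b \<Rightarrow> 'b \<Rightarrow> 'k) \<Rightarrow> bool" where
  "bilin_form scale h \<longleftrightarrow> (\<forall>x. lin scale (h x)) \<and> (\<forall>y. lin scale (\<lambda>x. h x y))"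

definition trilin_form :: "('k::field \<Rightarrow> 'b::ab_group_add \<Rightarrow> 'b) \<Rightarrow> ('b \<Rightarrow> 'b \<Rightarrow> 'b \<Rightarrow> 'k) \<Rightarrow> bool" where
  "trilin_form scale h \<longleftrightarrow> (\<forall>x y. lin scale (h x y)) \<and> (\<forall>x z. lin scale (\<lambda>y. h x y z))
     \<and> (\<forall>y z. lin scale (\<lambda>x. h x y z))"

definition bilin_map :: "('k::field \<Rightarrow> 'b::ab_group_add \<Rightarrow> 'b) \<Rightarrow> ('b \<Rightarrow> 'b \<Rightarrow> 'b) \<Rightarrow> bool" where
  "bilin_map scale m \<longleftrightarrow> (\<forall>x. Vector_Spaces.linear scale scale (m x))
     \<and> (\<forall>y. Vector_Spaces.linear scale scale (\<lambda>x. m x y))"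

definition teq2 :: "('k::field \<Rightarrow> 'b::ab_group_add \<Rightarrow> 'b) \<Rightarrow> ('b \<times> 'b) list \<Rightarrow> ('b \<times> 'b) list \<Rightarrow> bool" where
  "teq2 scale xs ys \<longleftrightarrow> (\<forall>h. bilin_form scale h \<longrightarrow>
      (\<Sum>(x,y)\<leftarrow>xs. h x y) = (\<Sum>(x,y)\<leftarrow>ys. h x y))"

definition coalgebra :: "('k::field \<Rightarrow> 'b::ab_group_add \<Rightarrow> 'b) \<Rightarrow> ('b \<Rightarrow> ('b \<times> 'b) list) \<Rightarrow> ('b \<Rightarrow> 'k) \<Rightarrow> bool" where
  "coalgebra scale comul eps \<longleftrightarrow>
     vector_space scale \<and>
     \<comment> \<open>Delta is linear B -> B (x) B\<close>
     (\<forall>h. bilin_form scale h \<longrightarrow> lin scale (\<lambda>b. \<Sum>(x,y)\<leftarrow>comul b. h x y)) \<and>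
     \<comment> \<open>epsilon is linear\<close>
     lin scale eps \<and>
     \<comment> \<open>counit axioms\<close>
     (\<forall>b. (\<Sum>(x,y)\<leftarrow>comul b. scale (eps x) y) = b) \<and>
     (\<forall>b. (\<Sum>(x,y)\<leftarrow>comul b. scale (eps y) x) = b) \<and>
     \<comment> \<open>coassociativity, tested against all trilinear forms\<close>
     (\<forall>h b. trilin_form scale h \<longrightarrow>
        (\<Sum>(x,y)\<leftarrow>comul b. \<Sum>(u,v)\<leftarrow>comul x. h u v y) =
        (\<Sum>(x,y)\<leftarrow>comul b. \<Sum>(u,v)\<leftarrow>comul y. h x u v))"

definition grouplike :: "('k::field \<Rightarrow> 'b::ab_group_add \<Rightarrow> 'b) \<Rightarrow> ('b \<Rightarrow> ('b \<times> 'b) list) \<Rightarrow> ('b \<Rightarrow> 'k) \<Rightarrow> 'b \<Rightarrow> bool" where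
  "grouplike scale comul eps g \<longleftrightarrow> teq2 scale (comul g) [(g, g)] \<and> eps g = 1"

text \<open>A linear map m : B (x) B -> B (given as a bilinear map) is a coalgebra map
  for the tensor product coalgebra structure on B (x) B.\<close>
definition coalg_map2 :: "('k::field \<Rightarrow> 'b::ab_group_add \<Rightarrow> 'b) \<Rightarrow> ('b \<Rightarrow> ('b \<times> 'b) list) \<Rightarrow> ('b \<Rightarrow> 'k) \<Rightarrow> ('b \<Rightarrow> 'b \<Rightarrow> 'b) \<Rightarrow> bool" where
  "coalg_map2 scale comul eps m \<longleftrightarrow> bilin_map scale m \<and>
     (\<forall>b b'. teq2 scale (comul (m b b'))
         (concat (map (\<lambda>(x,y). map (\<lambda>(u,v). (m x u, m y v)) (comul b')) (comul b)))) \<and>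
     (\<forall>b b'. eps (m b b') = eps b * eps b')"

definition rqbdl :: "('k::field_char_0 \<Rightarrow> 'b::ab_group_add \<Rightarrow> 'b) \<Rightarrow> ('b \<Rightarrow> ('b \<times> 'b) list) \<Rightarrow> ('b \<Rightarrow> 'k)
     \<Rightarrow> 'b \<Rightarrow> 'b \<Rightarrow> ('b \<Rightarrow> 'b \<Rightarrow> 'b) \<Rightarrow> ('b \<Rightarrow> 'b \<Rightarrow> 'b) \<Rightarrow> bool" where
  "rqbdl scale comul eps bt tp meet join \<longleftrightarrow>
     coalgebra scale comul eps \<and>
     grouplike scale comul eps bt \<and> grouplike scale comul eps tp \<and>
     coalg_map2 scale comul eps meet \<and> coalg_map2 scale comul eps join \<and>
     (\<forall>b b' b''. meet (meet b b') b'' = meet b (meet b' b'')) \<and>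
     (\<forall>b b' b''. join (join b b') b'' = join b (join b' b'')) \<and>
     (\<forall>b. meet b tp = b) \<and> (\<forall>b. join b bt = b) \<and>
     (\<forall>b b'. meet b b' = meet b' b) \<and> (\<forall>b b'. join b b' = join b' b) \<and>
     (\<forall>b b'. (\<Sum>(x,y)\<leftarrow>comul b. meet x (join y b')) = scale (eps b') b) \<and>
     (\<forall>b b'. (\<Sum>(x,y)\<leftarrow>comul b. join x (meet y b')) = scale (eps b') b) \<and>
     (\<forall>b b' b''. join b (meet b' b'') = (\<Sum>(x,y)\<leftarrow>comul b. meet (join x b') (join y b''))) \<and>
     (\<forall>b b' b''. meet b (join b' b'') = (\<Sum>(x,y)\<leftarrow>comul b. join (meet x b') (meet y b'')))"

definition quantum_negation :: "('k::field_char_0 \<Rightarrow> 'b::ab_group_add \<Rightarrow> 'b) \<Rightarrow> ('b \<Rightarrow> ('b \<times> 'b) list) \<Rightarrow> ('b \<Rightarrow> 'k)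
     \<Rightarrow> 'b \<Rightarrow> 'b \<Rightarrow> ('b \<Rightarrow> 'b \<Rightarrow> 'b) \<Rightarrow> ('b \<Rightarrow> 'b \<Rightarrow> 'b) \<Rightarrow> ('b \<Rightarrow> 'b) \<Rightarrow> bool" where
  "quantum_negation scale comul eps bt tp meet join neg \<longleftrightarrow>
     Vector_Spaces.linear scale scale neg \<and>
     (\<forall>b. neg (neg b) = b) \<and>
     (\<forall>b. teq2 scale (comul (neg b)) (map (\<lambda>(x,y). (neg y, neg x)) (comul b))) \<and>
     (\<forall>b. eps (neg b) = eps b) \<and>
     (\<forall>b. (\<Sum>(x,y)\<leftarrow>comul b. join (neg x) y) = scale (eps b) tp) \<and>
     (\<forall>b. (\<Sum>(x,y)\<leftarrow>comul b. join x (neg y)) = scale (eps b) tp) \<and>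
     (\<forall>b. (\<Sum>(x,y)\<leftarrow>comul b. meet (neg x) y) = scale (eps b) bt) \<and>
     (\<forall>b. (\<Sum>(x,y)\<leftarrow>comul b. meet x (neg y)) = scale (eps b) bt)"

end

theory Submission imports Defs begin

(* Classically a complement is unique: if c and c' both complement b, then
   c = c meet (b join c') = (c meet b) join (c meet c') = c meet c', and likewise c' = c' meet c.
   The same computation goes through in Sweedler notation, with the counit taking the place of
   top and bottom and coassociativity re-bracketing the iterated coproducts; it only needs the meet
   complement law of the first negation and the join complement law of the second, and yields
   neg b = sum neg(b1) meet neg'(b2).  Running it in the co-opposite coalgebra with the two
   negations exchanged gives neg' b = sum neg'(b2) meet neg(b1), and commutativity of meet ends
   the proof. *)

lemma linearD_add: "Vector_Spaces.linear s1 s2 f \<Longrightarrow> f (x + y) = f x + f y"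
  by (simp add: Vector_Spaces.linear_iff)

lemma linearD_scale: "Vector_Spaces.linear s1 s2 f \<Longrightarrow> f (s1 c x) = s2 c (f x)"
  by (simp add: Vector_Spaces.linear_iff)

lemma linear_sum_pairs:
  assumes "Vector_Spaces.linear s1 s2 f"
  shows "f (\<Sum>(x,y)\<leftarrow>l. g x y) = (\<Sum>(x,y)\<leftarrow>l. f (g x y))"
proof -
  have "f 0 = 0" using linearD_add[OF assms, of 0 0] by simp
  then show ?thesis by (induction l) (auto simp: linearD_add[OF assms])
qed

lemma scale_sum_pairs: "vector_space s \<Longrightarrow> s c (\<Sum>(x,y)\<leftarrow>l. g x y) = (\<Sum>(x,y)\<leftarrow>l. s c (g x y))"
  by (induction l) (auto simp: module.scale_right_distrib module.scale_zero_right module_iff_vector_space)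

lemma sum_pairs_add:
  "(\<Sum>(x,y)\<leftarrow>l. (g x y + h x y :: 'c::comm_monoid_add)) = (\<Sum>(x,y)\<leftarrow>l. g x y) + (\<Sum>(x,y)\<leftarrow>l. h x y)"
  by (induction l) (auto simp: algebra_simps)

lemma sum_pairs_swap:
  "(\<Sum>(x,y)\<leftarrow>l1. \<Sum>(u,v)\<leftarrow>l2. (f x y u v :: 'c::comm_monoid_add))
    = (\<Sum>(u,v)\<leftarrow>l2. \<Sum>(x,y)\<leftarrow>l1. f x y u v)"
  by (induction l1) (auto simp: sum_pairs_add)

lemma sum_pairs_map:
  "(\<Sum>(x,y)\<leftarrow>map (\<lambda>(x,y). (f x y, h x y)) l. g x y) = (\<Sum>(x,y)\<leftarrow>l. g (f x y) (h x y))"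
  by (induction l) auto

lemma linear_forms_separate_points:
  fixes scale :: "'k::field \<Rightarrow> 'b::ab_group_add \<Rightarrow> 'b"
  assumes vs: "vector_space scale" and eq: "\<And>f. lin scale f \<Longrightarrow> f a = f c"
  shows "a = c"
proof (rule ccontr)
  assume "a \<noteq> c"
  interpret vp: vector_space_pair scale "(*) :: 'k \<Rightarrow> 'k \<Rightarrow> 'k"
    by (simp add: vector_space_pair_def vs) (unfold_locales, auto simp: algebra_simps)
  have ind: "vp.vs1.independent {a - c}"
    using \<open>a \<noteq> c\<close> by (simp add: vp.vs1.independent_insert vp.vs1.span_empty)
  define f where "f = vp.construct {a - c} (\<lambda>_. 1)"
  have f: "lin scale f" unfolding f_def lin_def by (rule vp.linear_construct[OF ind])
  have "f (a - c) = 1" unfolding f_def by (rule vp.construct_basis[OF ind]) simp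
  then show False
    using eq[OF f] vp.linear_diff[of f a c] f unfolding lin_def by simp
qed

lemma linear_if_linear_forms_comp:
  assumes vs: "vector_space scale" and forms: "\<And>f. lin scale f \<Longrightarrow> lin scale (\<lambda>x. f (F x))"
  shows "Vector_Spaces.linear scale scale F"
  unfolding Vector_Spaces.linear_iff
proof (intro conjI allI vs)
  fix x y show "F (x + y) = F x + F y"
  proof (rule linear_forms_separate_points[OF vs])
    fix f assume f: "lin scale f"
    show "f (F (x + y)) = f (F x + F y)"
      using linearD_add[OF forms[OF f, unfolded lin_def]] linearD_add[OF f[unfolded lin_def]] by simp
  qed
next
  fix c x show "F (scale c x) = scale c (F x)"
  proof (rule linear_forms_separate_points[OF vs])
    fix f assume f: "lin scale f"
    show "f (F (scale c x)) = f (scale c (F x))"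
      using linearD_scale[OF forms[OF f, unfolded lin_def]] linearD_scale[OF f[unfolded lin_def]] by simp
  qed
qed

definition trilin_map :: "('k::field \<Rightarrow> 'b::ab_group_add \<Rightarrow> 'b) \<Rightarrow> ('b \<Rightarrow> 'b \<Rightarrow> 'b \<Rightarrow> 'b) \<Rightarrow> bool" where
  "trilin_map scale g \<longleftrightarrow> (\<forall>x y. Vector_Spaces.linear scale scale (g x y))
     \<and> (\<forall>x z. Vector_Spaces.linear scale scale (\<lambda>y. g x y z))
     \<and> (\<forall>y z. Vector_Spaces.linear scale scale (\<lambda>x. g x y z))"

lemma linear_comp: "Vector_Spaces.linear s1 s2 g \<Longrightarrow> Vector_Spaces.linear s2 s3 f
    \<Longrightarrow> Vector_Spaces.linear s1 s3 (\<lambda>x. f (g x))"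
  using Vector_Spaces.linear_compose[of s1 s2 g s3 f] by (simp add: o_def)

lemma bilin_form_comp: "bilin_map scale g \<Longrightarrow> lin scale f \<Longrightarrow> bilin_form scale (\<lambda>x y. f (g x y))"
  unfolding bilin_form_def bilin_map_def lin_def by (auto intro: linear_comp)

lemma trilin_form_comp: "trilin_map scale g \<Longrightarrow> lin scale f \<Longrightarrow> trilin_form scale (\<lambda>x y z. f (g x y z))"
  unfolding trilin_form_def trilin_map_def lin_def
  by (intro conjI allI; rule linear_comp[where f = f]; simp)

lemma teq2_sum_bilin_map_eq:
  assumes "vector_space scale" and "teq2 scale xs ys" and "bilin_map scale g"
  shows "(\<Sum>(x,y)\<leftarrow>xs. g x y) = (\<Sum>(x,y)\<leftarrow>ys. g x y)"
proof (rule linear_forms_separate_points[OF assms(1)])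
  fix f assume "lin scale f"
  with assms(2,3) show "f (\<Sum>(x,y)\<leftarrow>xs. g x y) = f (\<Sum>(x,y)\<leftarrow>ys. g x y)"
    unfolding teq2_def lin_def by (simp add: linear_sum_pairs bilin_form_comp[unfolded lin_def])
qed

lemma coalgebra_comul_bilin_map_linear:
  assumes c: "coalgebra scale comul eps" and g: "bilin_map scale g"
  shows "Vector_Spaces.linear scale scale (\<lambda>b. \<Sum>(x,y)\<leftarrow>comul b. g x y)"
proof (rule linear_if_linear_forms_comp)
  show "vector_space scale" using c by (simp add: coalgebra_def)
  fix f assume f: "lin scale f"
  then have "lin scale (\<lambda>b. \<Sum>(x,y)\<leftarrow>comul b. f (g x y))"
    using c bilin_form_comp[OF g f] by (simp add: coalgebra_def)
  then show "lin scale (\<lambda>b. f (\<Sum>(x,y)\<leftarrow>comul b. g x y))"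
    using f unfolding lin_def by (simp add: linear_sum_pairs)
qed

lemma coalgebra_coassoc_trilin_map:
  assumes c: "coalgebra scale comul eps" and g: "trilin_map scale g"
  shows "(\<Sum>(x,y)\<leftarrow>comul b. \<Sum>(u,v)\<leftarrow>comul x. g u v y)
       = (\<Sum>(x,y)\<leftarrow>comul b. \<Sum>(u,v)\<leftarrow>comul y. g x u v)"
proof (rule linear_forms_separate_points)
  show "vector_space scale" using c by (simp add: coalgebra_def)
  fix f assume f: "lin scale f"
  then show "f (\<Sum>(x,y)\<leftarrow>comul b. \<Sum>(u,v)\<leftarrow>comul x. g u v y)
           = f (\<Sum>(x,y)\<leftarrow>comul b. \<Sum>(u,v)\<leftarrow>comul y. g x u v)"
    using c trilin_form_comp[OF g f] unfolding coalgebra_def lin_def by (simp add: linear_sum_pairs)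
qed

locale quantum_complement_pair =
  fixes scale :: "'k::field \<Rightarrow> 'b::ab_group_add \<Rightarrow> 'b" and comul :: "'b \<Rightarrow> ('b \<times> 'b) list"
    and eps :: "'b \<Rightarrow> 'k" and bt tp :: 'b and meet join :: "'b \<Rightarrow> 'b \<Rightarrow> 'b"
    and neg neg' :: "'b \<Rightarrow> 'b"
  assumes vector_space: "vector_space scale"
    and meet_bilinear: "bilin_map scale meet" and join_bilinear: "bilin_map scale join"
    and neg_linear: "Vector_Spaces.linear scale scale neg"
    and neg'_linear: "Vector_Spaces.linear scale scale neg'"
    and comul_linear: "\<And>g. bilin_map scale g
      \<Longrightarrow> Vector_Spaces.linear scale scale (\<lambda>b. \<Sum>(x,y)\<leftarrow>comul b. g x y)"
    and coassoc: "\<And>g b. trilin_map scale g \<Longrightarrow>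
      (\<Sum>(x,y)\<leftarrow>comul b. \<Sum>(u,v)\<leftarrow>comul x. g u v y) = (\<Sum>(x,y)\<leftarrow>comul b. \<Sum>(u,v)\<leftarrow>comul y. g x u v)"
    and counit_left: "\<And>b. (\<Sum>(x,y)\<leftarrow>comul b. scale (eps x) y) = b"
    and counit_right: "\<And>b. (\<Sum>(x,y)\<leftarrow>comul b. scale (eps y) x) = b"
    and comul_neg: "\<And>g b. bilin_map scale g \<Longrightarrow>
      (\<Sum>(x,y)\<leftarrow>comul (neg b). g x y) = (\<Sum>(x,y)\<leftarrow>comul b. g (neg y) (neg x))"
    and meet_top: "\<And>b. meet b tp = b" and join_bot: "\<And>b. join b bt = b"
    and join_commute: "\<And>a b. join a b = join b a"
    and meet_join_distrib: "\<And>b b' b''.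
      meet b (join b' b'') = (\<Sum>(x,y)\<leftarrow>comul b. join (meet x b') (meet y b''))"
    and join_neg'_complement: "\<And>b. (\<Sum>(x,y)\<leftarrow>comul b. join x (neg' y)) = scale (eps b) tp"
    and meet_neg_complement: "\<And>b. (\<Sum>(x,y)\<leftarrow>comul b. meet (neg x) y) = scale (eps b) bt"
begin

lemma linear_meet_join:
  "Vector_Spaces.linear scale scale (meet a)" "Vector_Spaces.linear scale scale (\<lambda>x. meet x a)"
  "Vector_Spaces.linear scale scale (join a)" "Vector_Spaces.linear scale scale (\<lambda>x. join x a)"
  using meet_bilinear join_bilinear by (auto simp: bilin_map_def)

lemmas linear_simps =
  linear_meet_join[THEN linearD_add] linear_meet_join[THEN linearD_scale]
  neg_linear[THEN linearD_add] neg_linear[THEN linearD_scale]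
  neg'_linear[THEN linearD_add] neg'_linear[THEN linearD_scale]

lemma scale_linearI:
  assumes "\<And>x y. f (x + y) = f x + f y" "\<And>c x. f (scale c x) = scale c (f x)"
  shows "Vector_Spaces.linear scale scale f"
  using assms vector_space by (simp add: Vector_Spaces.linear_iff)

lemma sum_join_meet_neg_complement:
  assumes f: "Vector_Spaces.linear scale scale f"
  shows "(\<Sum>(q,r)\<leftarrow>comul y. \<Sum>(u,v)\<leftarrow>comul r. join (meet (neg q) u) (f v)) = f y"
proof -
  have "trilin_map scale (\<lambda>q u v. join (meet (neg q) u) (f v))"
    unfolding trilin_map_def
    by (auto intro!: scale_linearI simp: linear_simps linearD_add[OF f] linearD_scale[OF f])
  then have "(\<Sum>(q,r)\<leftarrow>comul y. \<Sum>(u,v)\<leftarrow>comul r. join (meet (neg q) u) (f v))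
      = (\<Sum>(s,v)\<leftarrow>comul y. \<Sum>(q,u)\<leftarrow>comul s. join (meet (neg q) u) (f v))"
    using coassoc by simp
  also have "\<dots> = (\<Sum>(s,v)\<leftarrow>comul y. join (\<Sum>(q,u)\<leftarrow>comul s. meet (neg q) u) (f v))"
    by (simp add: linear_sum_pairs[OF linear_meet_join(4)])
  also have "\<dots> = (\<Sum>(s,v)\<leftarrow>comul y. scale (eps s) (f v))"
    by (simp add: meet_neg_complement linear_simps join_bot join_commute[of bt])
  also have "\<dots> = f y"
    by (simp add: linear_sum_pairs[OF f, symmetric] linearD_scale[OF f, symmetric] counit_left)
  finally show ?thesis .
qed

lemma neg_eq_sum_meet_negs: "neg b = (\<Sum>(x,y)\<leftarrow>comul b. meet (neg x) (neg' y))"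
proof -
  define L where "L x q u v = join (meet (neg q) u) (meet (neg x) (neg' v))" for x q u v
  have "neg b = (\<Sum>(x,y)\<leftarrow>comul b. scale (eps y) (neg x))"
    by (simp add: linear_sum_pairs[OF neg_linear, symmetric] linearD_scale[OF neg_linear, symmetric]
        counit_right)
  also have "\<dots> = (\<Sum>(x,y)\<leftarrow>comul b. meet (neg x) (\<Sum>(u,v)\<leftarrow>comul y. join u (neg' v)))"
    by (simp add: join_neg'_complement linear_simps meet_top)
  also have "\<dots> = (\<Sum>(x,y)\<leftarrow>comul b. \<Sum>(u,v)\<leftarrow>comul y. meet (neg x) (join u (neg' v)))"
    by (simp add: linear_sum_pairs[OF linear_meet_join(1)])
  also have "\<dots> = (\<Sum>(x,y)\<leftarrow>comul b. \<Sum>(u,v)\<leftarrow>comul y. \<Sum>(p,q)\<leftarrow>comul x. L p q u v)"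
  proof -
    have "bilin_map scale (\<lambda>p q. join (meet p u) (meet q (neg' v)))" for u v
      unfolding bilin_map_def by (auto intro!: scale_linearI simp: linear_simps)
    then show ?thesis by (simp add: meet_join_distrib comul_neg L_def)
  qed
  also have "\<dots> = (\<Sum>(x,y)\<leftarrow>comul b. \<Sum>(p,q)\<leftarrow>comul x. \<Sum>(u,v)\<leftarrow>comul y. L p q u v)"
    by (subst sum_pairs_swap) (rule refl)
  also have "\<dots> = (\<Sum>(x,y)\<leftarrow>comul b. \<Sum>(q,r)\<leftarrow>comul y. \<Sum>(u,v)\<leftarrow>comul r. L x q u v)"
  proof (rule coassoc)
    have "Vector_Spaces.linear scale scale (\<lambda>y. \<Sum>(u,v)\<leftarrow>comul y. L p q u v)" for p q
      by (rule comul_linear) (auto simp: bilin_map_def L_def linear_simps intro!: scale_linearI)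
    then show "trilin_map scale (\<lambda>p q y. \<Sum>(u,v)\<leftarrow>comul y. L p q u v)"
      unfolding trilin_map_def
      by (auto simp: L_def[abs_def] linear_simps sum_pairs_add scale_sum_pairs[OF vector_space] intro!: scale_linearI)
  qed
  also have "\<dots> = (\<Sum>(x,y)\<leftarrow>comul b. meet (neg x) (neg' y))"
    unfolding L_def
    by (simp add: sum_join_meet_neg_complement linear_comp[OF neg'_linear linear_meet_join(1)])
  finally show ?thesis .
qed

end

lemma quantum_complement_pair_if_negations:
  assumes lattice: "rqbdl scale comul eps bt tp meet join"
    and negation: "quantum_negation scale comul eps bt tp meet join neg"
    and negation': "quantum_negation scale comul eps bt tp meet join neg'"
  shows "quantum_complement_pair scale comul eps bt tp meet join neg neg'"
proof -
  have c: "coalgebra scale comul eps" using lattice by (simp add: rqbdl_def)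
  then have vs: "vector_space scale" by (simp add: coalgebra_def)
  show ?thesis
  proof (rule quantum_complement_pair.intro)
    fix g b assume g: "bilin_map scale g"
    have "teq2 scale (comul (neg b)) (map (\<lambda>(x,y). (neg y, neg x)) (comul b))"
      using negation by (simp add: quantum_negation_def)
    from teq2_sum_bilin_map_eq[OF vs this g]
    show "(\<Sum>(x,y)\<leftarrow>comul (neg b). g x y) = (\<Sum>(x,y)\<leftarrow>comul b. g (neg y) (neg x))"
      unfolding sum_pairs_map .
  next
    fix g assume "bilin_map scale g"
    then show "Vector_Spaces.linear scale scale (\<lambda>b. \<Sum>(x,y)\<leftarrow>comul b. g x y)"
      by (rule coalgebra_comul_bilin_map_linear[OF c])
  next
    fix g b assume "trilin_map scale g"
    then show "(\<Sum>(x,y)\<leftarrow>comul b. \<Sum>(u,v)\<leftarrow>comul x. g u v y)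
             = (\<Sum>(x,y)\<leftarrow>comul b. \<Sum>(u,v)\<leftarrow>comul y. g x u v)"
      by (rule coalgebra_coassoc_trilin_map[OF c])
  next
    show "\<And>b. (\<Sum>(x,y)\<leftarrow>comul b. scale (eps x) y) = b" "\<And>b. (\<Sum>(x,y)\<leftarrow>comul b. scale (eps y) x) = b"
      using c unfolding coalgebra_def by blast+
  next
    show "bilin_map scale meet" "bilin_map scale join"
      using lattice unfolding rqbdl_def coalg_map2_def by blast+
  next
    show "\<And>b. meet b tp = b" "\<And>b. join b bt = b" "\<And>a b. join a b = join b a"
      "\<And>b b' b''. meet b (join b' b'') = (\<Sum>(x,y)\<leftarrow>comul b. join (meet x b') (meet y b''))"
      using lattice unfolding rqbdl_def by blast+
  next
    show "Vector_Spaces.linear scale scale neg" "\<And>b. (\<Sum>(x,y)\<leftarrow>comul b. meet (neg x) y) = scale (eps b) bt"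
      using negation unfolding quantum_negation_def by blast+
  next
    show "Vector_Spaces.linear scale scale neg'" "\<And>b. (\<Sum>(x,y)\<leftarrow>comul b. join x (neg' y)) = scale (eps b) tp"
      using negation' unfolding quantum_negation_def by blast+
  qed (rule vs)
qed

(* Flipping the coproduct turns the meet law of neg and the join law of neg' into the other halves
   of the complement laws, so the roles of the two negations can be exchanged. *)
lemma quantum_complement_pair_coopposite:
  assumes lattice: "rqbdl scale comul eps bt tp meet join"
    and negation: "quantum_negation scale comul eps bt tp meet join neg"
    and negation': "quantum_negation scale comul eps bt tp meet join neg'"
  shows "quantum_complement_pair scale (\<lambda>b. map (\<lambda>(x,y). (y, x)) (comul b)) eps bt tp meet join neg neg'"
proof -
  interpret quantum_complement_pair scale comul eps bt tp meet join neg neg'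
    using quantum_complement_pair_if_negations[OF assms] .
  have meet_commute: "\<And>a b. meet a b = meet b a" using lattice by (simp add: rqbdl_def)
  show ?thesis
  proof (rule quantum_complement_pair.intro, unfold sum_pairs_map)
    fix g assume "bilin_map scale g"
    then show "Vector_Spaces.linear scale scale (\<lambda>b. \<Sum>(x,y)\<leftarrow>comul b. g y x)"
      by (intro comul_linear) (simp add: bilin_map_def)
  next
    fix g b assume "trilin_map scale g"
    then have "trilin_map scale (\<lambda>x y z. g z y x)" by (simp add: trilin_map_def)
    from coassoc[OF this, of b]
    show "(\<Sum>(x,y)\<leftarrow>comul b. \<Sum>(u,v)\<leftarrow>comul y. g v u x) = (\<Sum>(x,y)\<leftarrow>comul b. \<Sum>(u,v)\<leftarrow>comul x. g y v u)"
      by simp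
  next
    fix g b assume "bilin_map scale g"
    then have "bilin_map scale (\<lambda>x y. g y x)" by (simp add: bilin_map_def)
    from comul_neg[OF this, of b]
    show "(\<Sum>(x,y)\<leftarrow>comul (neg b). g y x) = (\<Sum>(x,y)\<leftarrow>comul b. g (neg x) (neg y))" by simp
  next
    fix b b' b''
    show "meet b (join b' b'') = (\<Sum>(x,y)\<leftarrow>comul b. join (meet y b') (meet x b''))"
      using meet_join_distrib[of b b'' b'] join_commute by simp
  next
    fix b
    show "(\<Sum>(x,y)\<leftarrow>comul b. join y (neg' x)) = scale (eps b) tp"
      using negation' join_commute by (simp add: quantum_negation_def)
    show "(\<Sum>(x,y)\<leftarrow>comul b. meet (neg y) x) = scale (eps b) bt"
      using negation meet_commute by (simp add: quantum_negation_def)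
  qed (simp_all add: vector_space meet_bilinear join_bilinear neg_linear neg'_linear
      counit_left counit_right meet_top join_bot join_commute)
qed

theorem mainTheorem8:
  fixes scale :: "'k::field_char_0 \<Rightarrow> 'b::ab_group_add \<Rightarrow> 'b"
    and comul :: "'b \<Rightarrow> ('b \<times> 'b) list" and eps :: "'b \<Rightarrow> 'k"
    and bt tp :: 'b and meet join :: "'b \<Rightarrow> 'b \<Rightarrow> 'b"
    and neg neg' :: "'b \<Rightarrow> 'b"
  assumes "rqbdl scale comul eps bt tp meet join"
    and "quantum_negation scale comul eps bt tp meet join neg"
    and "quantum_negation scale comul eps bt tp meet join neg'"
  shows "neg = neg'"
proof
  fix b
  have "neg b = (\<Sum>(x,y)\<leftarrow>comul b. meet (neg x) (neg' y))"
    using quantum_complement_pair.neg_eq_sum_meet_negs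
      [OF quantum_complement_pair_if_negations[OF assms(1,2,3)]] .
  also have "\<dots> = (\<Sum>(x,y)\<leftarrow>comul b. meet (neg' y) (neg x))"
    using assms(1) by (simp add: rqbdl_def)
  also have "\<dots> = neg' b"
    using quantum_complement_pair.neg_eq_sum_meet_negs
      [OF quantum_complement_pair_coopposite[OF assms(1,3,2)], of b]
    by (simp only: sum_pairs_map)
  finally show "neg b = neg' b" .
qed

end
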